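(* For every $\xi\in V^*$ and every $a$ one has \[ d\nu^a=(a+1)\psi^{a+1},\qquad \xi\wedge\psi^a=-d\xi_V\wedge\psi^{a-1},\qquad \xi\wedge\nu^a=\xi_V\psi^a-d\xi_V\wedge\nu^{a-1}. \] In particular, with $\kappa_V=\sum_{j=1}^n\mu_{j,V}\otimes\ell_j$ (so that $d\kappa_V=\kappa=\sum_jd\mu_{j,V}\otimes\ell_j$), one has \[ \kappa\wedge\nu^a=\kappa_V\psi^a-d\kappa_V\wedge\nu^{a-1}. \]
   Context: $L$ is a free abelian group of rank $n$ with basis $\ell_1,\dots,\ell_n$, $V=\mathbb{R}\otimes L$, and $\mu_1,\dots,\mu_n$ is the dual basis of $V^*$. For $\xi\in V^*$, $\xi_V$ denotes the corresponding linear function on $V$. Let $\mathcal{A}=\Omega^\cdot(V)\otimes\Lambda^\cdot V^*$ be the graded-commutative differential graded algebra with differential $d(\omega\otimes\eta)=d\omega\otimes\eta$. Let $\theta$ be the derivation of $\mathcal{A}$ of degree $-1$ which vanishes on $\Omega^\cdot(V)$ and sends $\xi\in V^*\subset\Lambda^1V^*$ to $\xi_V$. Let $\Delta:\Lambda^\cdot V^*\to\mathcal{A}$ be the algebra homomorphism with $\Delta(\xi)=d\xi_V+\xi$. Put $\mathrm{vol}=\mu_1\wedge\dots\wedge\mu_n\otimes\ell_1\wedge\dots\wedge\ell_n\in\Lambda^nV^*\otimes\Lambda^nL$ and $\psi=\Delta(\mathrm{vol})=\sum_a\psi^a$ with $\psi^a\in\Omega^a(V)\otimes\Lambda^{n-a}V^*\otimes\Lambda^nL$.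 Define $\nu^a=\theta(\psi^a)\in\Omega^a(V)\otimes\Lambda^{n-1-a}V^*\otimes\Lambda^nL$, with $\psi^a=\nu^a=0$ for $a<0$. The elements $\ell_j$ are formal coefficients, so $\kappa_V$ is a $\mathrm{Sym}\,L_{\mathbb{R}}$-valued function and $\kappa$ a $\mathrm{Sym}\,L_{\mathbb{R}}$-valued 1-form. *)

theory Defs
  imports "HOL-Analysis.Analysis"
begin

text \<open>
Model of the algebra A = Omega(V) tensor Lambda V^*, with V = R^n, coordinates x_0..x_(n-1)
(the coordinates w.r.t. the basis l_1..l_n; the dual basis mu_j is the coordinate function).
Points of V are represented as functions nat => real (only the first n coordinates matter).
Since A is a graded-commutative tensor product of two exterior algebras (Koszul sign rule),
it is the algebra of smooth functions tensor the exterior algebra on 2n odd generators: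
generator i (i < n) is dx_i, generator n + j (j < n) is mu_j in Lambda^1 V^*.
An element of A is given by its coefficient functions: the coefficient of the basis
monomial e_S (product of the generators in S in increasing order) is a function V -> R.
\<close>

type_synonym form = "nat set \<Rightarrow> (nat \<Rightarrow> real) \<Rightarrow> real"

definition inv_count :: "nat set \<Rightarrow> nat set \<Rightarrow> nat" where
  "inv_count S T = card {(s, t). s \<in> S \<and> t \<in> T \<and> t < s}"

text \<open>sign with e_S wedge e_T = ksign S T * e_(S union T) for disjoint S, T\<close>
definition ksign :: "nat set \<Rightarrow> nat set \<Rightarrow> real" where
  "ksign S T = (-1) ^ inv_count S T"

definition fzero :: form where
  "fzero = (\<lambda>S x. 0)"

definition fadd :: "form \<Rightarrow> form \<Rightarrow> form" where
  "fadd a b = (\<lambda>S x. a S x + b S x)"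

definition fsub :: "form \<Rightarrow> form \<Rightarrow> form" where
  "fsub a b = (\<lambda>S x. a S x - b S x)"

definition fsmul :: "real \<Rightarrow> form \<Rightarrow> form" where
  "fsmul r a = (\<lambda>S x. r * a S x)"

definition fwedge :: "form \<Rightarrow> form \<Rightarrow> form" where
  "fwedge a b = (\<lambda>S x. \<Sum>T\<in>Pow S. ksign T (S - T) * a T x * b (S - T) x)"

definition fone :: form where
  "fone = (\<lambda>S x. if S = {} then 1 else 0)"

definition fun0 :: "((nat \<Rightarrow> real) \<Rightarrow> real) \<Rightarrow> form" where
  "fun0 f = (\<lambda>S x. if S = {} then f x else 0)"

definition partial_deriv :: "nat \<Rightarrow> ((nat \<Rightarrow> real) \<Rightarrow> real) \<Rightarrow> (nat \<Rightarrow> real) \<Rightarrow> real" where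
  "partial_deriv i f x = deriv (\<lambda>t. f (x(i := t))) (x i)"

definition fd :: "nat \<Rightarrow> form \<Rightarrow> form" where
  "fd n a = (\<lambda>S x. \<Sum>i\<in>S \<inter> {..<n}. ksign {i} (S - {i}) * partial_deriv i (a (S - {i})) x)"

text \<open>an element xi = sum_j c_j mu_j of V^*, as an element of Lambda^1 V^* inside A\<close>
definition covec :: "nat \<Rightarrow> (nat \<Rightarrow> real) \<Rightarrow> form" where
  "covec n c = (\<lambda>S x. \<Sum>j<n. if S = {n + j} then c j else 0)"

definition lin_fun :: "nat \<Rightarrow> (nat \<Rightarrow> real) \<Rightarrow> (nat \<Rightarrow> real) \<Rightarrow> real" where
  "lin_fun n c x = (\<Sum>j<n. c j * x j)"

text \<open>the derivation theta of degree -1: zero on Omega(V), mu_j |-> mu_(j,V) = x_j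
  (graded derivation, written out on basis monomials)\<close>
definition ftheta :: "nat \<Rightarrow> form \<Rightarrow> form" where
  "ftheta n a = (\<lambda>S x. \<Sum>s\<in>{n..<2*n} - S.
       (-1) ^ card {t\<in>S. t < s} * x (s - n) * a (insert s S) x)"

definition Delta1 :: "nat \<Rightarrow> (nat \<Rightarrow> real) \<Rightarrow> form" where
  "Delta1 n c = fadd (fd n (fun0 (lin_fun n c))) (covec n c)"

definition unitv :: "nat \<Rightarrow> nat \<Rightarrow> real" where
  "unitv j = (\<lambda>k. if k = j then 1 else 0)"

text \<open>psi = Delta(mu_1 wedge ... wedge mu_n) = Delta(mu_1) wedge ... wedge Delta(mu_n)
  (the constant factor l_1 wedge ... wedge l_n in Lambda^n L is omitted)\<close>
definition psi :: "nat \<Rightarrow> form" where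
  "psi n = foldr (\<lambda>j acc. fwedge (Delta1 n (unitv j)) acc) [0..<n] fone"

definition omega_part :: "nat \<Rightarrow> int \<Rightarrow> form \<Rightarrow> form" where
  "omega_part n p a = (\<lambda>S x. if int (card (S \<inter> {..<n})) = p then a S x else 0)"

definition psi_part :: "nat \<Rightarrow> int \<Rightarrow> form" where
  "psi_part n a = omega_part n a (psi n)"

definition nu :: "nat \<Rightarrow> int \<Rightarrow> form" where
  "nu n a = ftheta n (psi_part n a)"

text \<open>L-valued elements: j |-> coefficient of l_j (j < n)\<close>
definition kappaV :: "nat \<Rightarrow> nat \<Rightarrow> form" where
  "kappaV n j = (if j < n then fun0 (\<lambda>x. x j) else fzero)"

definition kappa1 :: "nat \<Rightarrow> nat \<Rightarrow> form" where
  "kappa1 n j = (if j < n then covec n (unitv j) else fzero)"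

end

theory Submission
  imports Defs
begin

text \<open>
Write \<open>e\<^sub>g\<close> for left multiplication by the generator \<open>g\<close> (\<open>dx\<^sub>i\<close> for \<open>g = i < n\<close>,
\<open>\<mu>\<^sub>j\<close> for \<open>g = n + j\<close>) and \<open>\<iota>\<^sub>g\<close> for the contraction with it. Then \<open>\<psi>\<close> is the
product of the odd elements \<open>e\<^sub>j + e\<^bsub>n+j\<^esub>\<close> applied to \<open>1\<close>; each of them squares to zero and
anticommutes with the others, so \<open>(e\<^sub>j + e\<^bsub>n+j\<^esub>) \<psi> = 0\<close>. Splitting by form degree gives
\<open>\<mu>\<^sub>j \<and> \<psi>\<^sup>a = - dx\<^sub>j \<and> \<psi>\<^bsup>a-1\<^esup>\<close>, which is the second identity by linearity in \<open>\<xi>\<close>.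
Since \<open>\<theta> = \<Sum>\<^sub>j x\<^sub>j \<iota>\<^bsub>n+j\<^esub>\<close>, we have \<open>\<theta> e\<^sub>g + e\<^sub>g \<theta> = x\<^bsub>g-n\<^esub>\<close> for \<open>n \<le> g < 2n\<close> and \<open>0\<close>
otherwise; applying \<open>\<theta>\<close> to that identity gives the third one, and the fourth is its instance
\<open>\<xi> = \<mu>\<^sub>j\<close>. The first is proved by induction over the factors of \<open>\<psi>\<close>, using that \<open>d\<close>
anticommutes with \<open>e\<^sub>g\<close> and that \<open>d (x\<^sub>m \<beta>) = dx\<^sub>m \<and> \<beta>\<close> when \<open>\<beta>\<close> has constant coefficients.
\<close>

section \<open>Multiplication by generators\<close>

definition count_below :: "nat set \<Rightarrow> nat \<Rightarrow> nat" where
  "count_below S g = card {t\<in>S. t < g}"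

definition gen_wedge :: "nat \<Rightarrow> form \<Rightarrow> form" where
  "gen_wedge g a = (\<lambda>S x. if finite S \<and> g \<in> S then (-1) ^ count_below S g * a (S - {g}) x else 0)"

definition gen_contract :: "nat \<Rightarrow> form \<Rightarrow> form" where
  "gen_contract g a = (\<lambda>S x. if g \<notin> S then (-1) ^ count_below S g * a (insert g S) x else 0)"

definition pair_wedge :: "nat \<Rightarrow> nat \<Rightarrow> form \<Rightarrow> form" where
  "pair_wedge g h a = fadd (gen_wedge g a) (gen_wedge h a)"

definition fmult :: "((nat \<Rightarrow> real) \<Rightarrow> real) \<Rightarrow> form \<Rightarrow> form" where
  "fmult f a = (\<lambda>S x. f x * a S x)"

text \<open>Coefficients at infinite index sets are junk: \<open>fwedge\<close> and \<open>gen_wedge\<close> are \<open>0\<close> there.\<close>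

definition finitary :: "form \<Rightarrow> bool" where
  "finitary a \<longleftrightarrow> (\<forall>S x. infinite S \<longrightarrow> a S x = 0)"

lemma count_below_remove:
  assumes "finite S" "i \<in> S" "i \<noteq> g"
  shows "count_below S g = count_below (S - {i}) g + (if i < g then 1 else 0)"
proof (cases "i < g")
  case True
  have "{t\<in>S. t < g} = insert i {t\<in>S - {i}. t < g}" using assms True by auto
  then show ?thesis using assms True unfolding count_below_def by simp
next
  case False
  have "{t\<in>S. t < g} = {t\<in>S - {i}. t < g}" using assms False by auto
  then show ?thesis using False unfolding count_below_def by simp
qed

lemma count_below_insert:
  assumes "finite S" "s \<notin> S" "s \<noteq> g"
  shows "count_below (insert s S) g = count_below S g + (if s < g then 1 else 0)"
  using count_below_remove[of "insert s S" s g] assms by simp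

lemma count_below_remove_self: "count_below (S - {g}) g = count_below S g"
  unfolding count_below_def by (rule arg_cong[where f=card]) auto

lemma count_below_insert_self: "count_below (insert g S) g = count_below S g"
  unfolding count_below_def by (rule arg_cong[where f=card]) auto

lemma count_below_remove_sign:
  assumes "finite S" "g \<in> S" "h \<in> S" "g \<noteq> h"
  shows "(-1) ^ count_below S g * (-1) ^ count_below (S - {g}) h
       = - ((-1) ^ count_below S h * (-1) ^ count_below (S - {h}) g :: real)"
proof -
  have "count_below S h = count_below (S - {g}) h + (if g < h then 1 else 0)"
    using count_below_remove[OF assms(1,2)] assms(4) by simp
  moreover have "count_below S g = count_below (S - {h}) g + (if h < g then 1 else 0)"
    using count_below_remove[OF assms(1,3)] assms(4) by simp
  ultimately show ?thesis using assms(4) by (cases "g < h") (auto simp: power_add)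
qed

lemma ksign_singleton: "ksign {g} R = (-1) ^ count_below R g"
proof -
  have "{(s, t). s \<in> {g} \<and> t \<in> R \<and> t < s} = Pair g ` {t\<in>R. t < g}" by auto
  then have "inv_count {g} R = count_below R g"
    unfolding inv_count_def count_below_def by (simp add: card_image inj_on_def)
  then show ?thesis unfolding ksign_def by simp
qed

lemma ksign_empty: "ksign {} R = 1"
  unfolding ksign_def inv_count_def by simp

lemma gen_wedge_fadd: "gen_wedge g (fadd a b) = fadd (gen_wedge g a) (gen_wedge g b)"
  unfolding gen_wedge_def fadd_def by (auto simp: fun_eq_iff algebra_simps)

lemma gen_wedge_fsmul: "gen_wedge g (fsmul r a) = fsmul r (gen_wedge g a)"
  unfolding gen_wedge_def fsmul_def by (auto simp: fun_eq_iff algebra_simps)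

lemma gen_wedge_fzero: "gen_wedge g fzero = fzero"
  unfolding gen_wedge_def fzero_def by (auto simp: fun_eq_iff)

lemma gen_wedge_gen_wedge_self: "gen_wedge g (gen_wedge g a) = fzero"
  unfolding gen_wedge_def fzero_def by (auto simp: fun_eq_iff)

lemma gen_wedge_anticommute:
  assumes "g \<noteq> h"
  shows "gen_wedge g (gen_wedge h a) = fsmul (-1) (gen_wedge h (gen_wedge g a))"
proof (intro ext)
  fix S x
  show "gen_wedge g (gen_wedge h a) S x = fsmul (-1) (gen_wedge h (gen_wedge g a)) S x"
  proof (cases "finite S \<and> g \<in> S \<and> h \<in> S")
    case True
    have swap: "S - {g} - {h} = S - {h} - {g}" by auto
    from True have "gen_wedge g (gen_wedge h a) S x
        = ((-1) ^ count_below S g * (-1) ^ count_below (S - {g}) h) * a (S - {g} - {h}) x"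
      using assms by (simp add: gen_wedge_def)
    also have "\<dots> = - ((-1) ^ count_below S h * (-1) ^ count_below (S - {h}) g) * a (S - {h} - {g}) x"
      using True assms count_below_remove_sign[of S g h] by (simp add: swap)
    also have "\<dots> = fsmul (-1) (gen_wedge h (gen_wedge g a)) S x"
      using True assms by (simp add: gen_wedge_def fsmul_def)
    finally show ?thesis .
  next
    case False
    then show ?thesis unfolding gen_wedge_def fsmul_def by auto
  qed
qed

lemma pair_wedge_fzero: "pair_wedge g h fzero = fzero"
  unfolding pair_wedge_def gen_wedge_fzero by (simp add: fun_eq_iff fadd_def fzero_def)

lemma pair_wedge_pair_wedge_self:
  assumes "g \<noteq> h"
  shows "pair_wedge g h (pair_wedge g h a) = fzero"
  unfolding pair_wedge_def gen_wedge_fadd gen_wedge_gen_wedge_self gen_wedge_anticommute[OF assms]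
  by (simp add: fun_eq_iff fadd_def fsmul_def fzero_def)

lemma pair_wedge_anticommute:
  assumes "distinct [g, h, g', h']"
  shows "pair_wedge g h (pair_wedge g' h' a) = fsmul (-1) (pair_wedge g' h' (pair_wedge g h a))"
proof -
  have d: "g \<noteq> g'" "g \<noteq> h'" "h \<noteq> g'" "h \<noteq> h'" using assms by auto
  show ?thesis
    unfolding pair_wedge_def gen_wedge_fadd gen_wedge_anticommute[OF d(1)] gen_wedge_anticommute[OF d(2)]
      gen_wedge_anticommute[OF d(3)] gen_wedge_anticommute[OF d(4)]
    by (simp add: fun_eq_iff fadd_def fsmul_def)
qed

lemma gen_contract_gen_wedge:
  assumes "finitary a"
  shows "gen_contract s (gen_wedge g a) S x
       = (if s = g then a S x else 0) - gen_wedge g (gen_contract s a) S x"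
proof (cases "finite S")
  case False
  then show ?thesis using assms by (auto simp: gen_contract_def gen_wedge_def finitary_def)
next
  case fin: True
  show ?thesis
  proof (cases "s = g")
    case True
    have "(-1) ^ k * (-1) ^ k = (1::real)" for k :: nat by (simp add: power_add[symmetric])
    then show ?thesis using True fin
      by (auto simp: gen_contract_def gen_wedge_def count_below_insert_self
          count_below_remove_self insert_absorb)
  next
    case sg: False
    show ?thesis
    proof (cases "s \<notin> S \<and> g \<in> S")
      case True
      have "count_below S s = count_below (S - {g}) s + (if g < s then 1 else 0)"
        using count_below_remove[OF fin] True sg by simp
      moreover have "count_below (insert s S) g = count_below S g + (if s < g then 1 else 0)"
        using count_below_insert[OF fin] True sg by simp
      moreover have "insert s S - {g} = insert s (S - {g})" using sg by auto
      ultimately show ?thesis using True sg fin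
        by (cases "s < g") (auto simp: gen_contract_def gen_wedge_def power_add)
    next
      case False
      then show ?thesis using sg fin by (auto simp: gen_contract_def gen_wedge_def)
    qed
  qed
qed

lemma ftheta_eq_sum_gen_contract:
  "ftheta n a S x = (\<Sum>s\<in>{n..<2*n}. x (s - n) * gen_contract s a S x)"
proof -
  have "(\<Sum>s\<in>{n..<2*n} - S. f s) = (\<Sum>s\<in>{n..<2*n}. if s \<notin> S then f s else 0)"
    for f :: "nat \<Rightarrow> real"
    unfolding set_diff_eq by (rule sum.inter_filter) simp
  then show ?thesis
    unfolding ftheta_def gen_contract_def count_below_def
    by (auto intro!: sum.cong simp: mult_ac)
qed

lemma ftheta_gen_wedge:
  assumes "finitary a"
  shows "ftheta n (gen_wedge g a)
       = fsub (if n \<le> g \<and> g < 2 * n then fmult (\<lambda>x. x (g - n)) a else fzero)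
              (gen_wedge g (ftheta n a))"
proof (intro ext)
  fix S x
  let ?M = "{n..<2*n}"
  have "ftheta n (gen_wedge g a) S x = (\<Sum>s\<in>?M.
          (if s = g then x (s - n) * a S x else 0) - x (s - n) * gen_wedge g (gen_contract s a) S x)"
    unfolding ftheta_eq_sum_gen_contract gen_contract_gen_wedge[OF assms]
    by (intro sum.cong) (auto simp: right_diff_distrib)
  also have "\<dots> = (if g \<in> ?M then x (g - n) * a S x else 0)
                 - (\<Sum>s\<in>?M. x (s - n) * gen_wedge g (gen_contract s a) S x)"
    by (simp add: sum_subtractf sum.delta)
  also have "(\<Sum>s\<in>?M. x (s - n) * gen_wedge g (gen_contract s a) S x) = gen_wedge g (ftheta n a) S x"
    by (auto simp: gen_wedge_def ftheta_eq_sum_gen_contract sum_distrib_left mult_ac)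
  finally show "ftheta n (gen_wedge g a) S x
      = fsub (if n \<le> g \<and> g < 2 * n then fmult (\<lambda>x. x (g - n)) a else fzero)
              (gen_wedge g (ftheta n a)) S x"
    by (simp add: fsub_def fmult_def fzero_def)
qed

lemma ftheta_fadd: "ftheta n (fadd a b) = fadd (ftheta n a) (ftheta n b)"
  unfolding ftheta_def fadd_def by (simp add: fun_eq_iff algebra_simps sum.distrib)

lemma ftheta_fsmul: "ftheta n (fsmul r a) = fsmul r (ftheta n a)"
  unfolding ftheta_def fsmul_def by (simp add: fun_eq_iff algebra_simps sum_distrib_left)

lemma fwedge_fadd_left: "fwedge (fadd u v) a = fadd (fwedge u a) (fwedge v a)"
  unfolding fwedge_def fadd_def by (simp add: algebra_simps sum.distrib)

lemma fwedge_fzero_left: "fwedge fzero a = fzero"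
  unfolding fwedge_def fzero_def by (simp add: fun_eq_iff)

lemma fwedge_fun0:
  assumes "finitary a"
  shows "fwedge (fun0 f) a = fmult f a"
proof (intro ext)
  fix S x
  show "fwedge (fun0 f) a S x = fmult f a S x"
  proof (cases "finite S")
    case False
    then show ?thesis using assms by (simp add: fwedge_def fmult_def finitary_def)
  next
    case True
    have "fwedge (fun0 f) a S x = (\<Sum>T\<in>Pow S. if T = {} then f x * a S x else 0)"
      unfolding fwedge_def fun0_def by (intro sum.cong refl) (auto simp: ksign_empty)
    also have "\<dots> = f x * a S x" using True by (simp add: sum.delta')
    finally show ?thesis by (simp add: fmult_def)
  qed
qed

lemma fwedge_sum_generators:
  assumes "finite J"
  shows "fwedge (\<lambda>S x. \<Sum>j\<in>J. if S = {h j} then w j else 0) a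
       = (\<lambda>S x. \<Sum>j\<in>J. w j * gen_wedge (h j) a S x)"
proof (intro ext)
  fix S x
  show "fwedge (\<lambda>S x. \<Sum>j\<in>J. if S = {h j} then w j else 0) a S x
       = (\<Sum>j\<in>J. w j * gen_wedge (h j) a S x)"
  proof (cases "finite S")
    case False
    then show ?thesis by (simp add: fwedge_def gen_wedge_def)
  next
    case True
    have "fwedge (\<lambda>S x. \<Sum>j\<in>J. if S = {h j} then w j else 0) a S x
       = (\<Sum>T\<in>Pow S. \<Sum>j\<in>J. if T = {h j} then w j * (ksign T (S - T) * a (S - T) x) else 0)"
      unfolding fwedge_def
      by (intro sum.cong refl) (simp add: sum_distrib_left sum_distrib_right if_distrib algebra_simps cong: if_cong)
    also have "\<dots> = (\<Sum>j\<in>J. \<Sum>T\<in>Pow S. if T = {h j} then w j * (ksign T (S - T) * a (S - T) x) else 0)"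
      by (rule sum.swap)
    also have "\<dots> = (\<Sum>j\<in>J. w j * gen_wedge (h j) a S x)"
      using True by (auto intro!: sum.cong simp: sum.delta' gen_wedge_def ksign_singleton count_below_remove_self)
    finally show ?thesis .
  qed
qed

lemma fwedge_covec: "fwedge (covec n c) a = (\<lambda>S x. \<Sum>j<n. c j * gen_wedge (n + j) a S x)"
  unfolding covec_def by (rule fwedge_sum_generators) simp

lemma partial_deriv_const: "(\<And>y. f y = k) \<Longrightarrow> partial_deriv i f x = 0"
  unfolding partial_deriv_def by simp

lemma partial_deriv_lin_fun:
  assumes "i < n"
  shows "partial_deriv i (lin_fun n c) x = c i"
proof -
  have "lin_fun n c (x(i := t)) = c i * t + (\<Sum>j\<in>{..<n} - {i}. c j * x j)" for t
    unfolding lin_fun_def using assms by (simp add: sum.remove[of "{..<n}" i])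
  then show ?thesis
    unfolding partial_deriv_def by (simp add: ext) 
qed

lemma fd_fun0_lin_fun: "fd n (fun0 (lin_fun n c)) = (\<lambda>S x. \<Sum>j<n. if S = {j} then c j else 0)"
proof (intro ext)
  fix S x
  show "fd n (fun0 (lin_fun n c)) S x = (\<Sum>j<n. if S = {j} then c j else 0)"
  proof (cases "\<exists>j<n. S = {j}")
    case True
    then obtain j where j: "j < n" "S = {j}" by auto
    have "ksign {j} {} = 1" by (simp add: ksign_def inv_count_def)
    then show ?thesis using j by (simp add: fd_def fun0_def partial_deriv_lin_fun)
  next
    case False
    then have "S - {i} \<noteq> {}" if "i \<in> S \<inter> {..<n}" for i using that by auto
    then have "fd n (fun0 (lin_fun n c)) S x = 0"
      unfolding fd_def fun0_def by (intro sum.neutral ballI) (simp add: partial_deriv_def)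
    then show ?thesis using False by simp
  qed
qed

lemma fwedge_fd_lin_fun:
  "fwedge (fd n (fun0 (lin_fun n c))) a = (\<lambda>S x. \<Sum>j<n. c j * gen_wedge j a S x)"
  unfolding fd_fun0_lin_fun by (rule fwedge_sum_generators[where h="\<lambda>j. j"]) simp

section \<open>Regularity of coefficients, the differential and form degree\<close>

definition const_coeffs :: "form \<Rightarrow> bool" where
  "const_coeffs a \<longleftrightarrow> (\<forall>S x y. a S x = a S y)"

definition diff_coeffs :: "form \<Rightarrow> bool" where
  "diff_coeffs a \<longleftrightarrow> (\<forall>S x i. (\<lambda>t. a S (x(i := t))) field_differentiable (at (x i)))"

lemma finitary_fone: "finitary fone"
  unfolding finitary_def fone_def by auto

lemma finitary_fadd: "finitary a \<Longrightarrow> finitary b \<Longrightarrow> finitary (fadd a b)"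
  unfolding finitary_def fadd_def by auto

lemma finitary_gen_wedge: "finitary (gen_wedge g a)"
  unfolding finitary_def gen_wedge_def by auto

lemma finitary_pair_wedge: "finitary (pair_wedge g h a)"
  unfolding pair_wedge_def by (intro finitary_fadd finitary_gen_wedge)

lemma finitary_omega_part: "finitary a \<Longrightarrow> finitary (omega_part n p a)"
  unfolding finitary_def omega_part_def by auto

lemma const_coeffs_fone: "const_coeffs fone"
  unfolding const_coeffs_def fone_def by auto

lemma const_coeffs_fadd: "const_coeffs a \<Longrightarrow> const_coeffs b \<Longrightarrow> const_coeffs (fadd a b)"
  unfolding const_coeffs_def fadd_def by (intro allI) (smt (verit))

lemma const_coeffs_gen_wedge: "const_coeffs a \<Longrightarrow> const_coeffs (gen_wedge g a)"
  unfolding const_coeffs_def gen_wedge_def by (intro allI) (smt (verit))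

lemma const_coeffs_pair_wedge: "const_coeffs a \<Longrightarrow> const_coeffs (pair_wedge g h a)"
  unfolding pair_wedge_def by (intro const_coeffs_fadd const_coeffs_gen_wedge)

lemma const_coeffs_omega_part: "const_coeffs a \<Longrightarrow> const_coeffs (omega_part n p a)"
  unfolding const_coeffs_def omega_part_def by (intro allI) (smt (verit))

lemma diff_coeffs_const:
  assumes "const_coeffs a"
  shows "diff_coeffs a"
proof -
  have "(\<lambda>t. a S (x(i := t))) = (\<lambda>t. a S x)" for S x i
    using assms unfolding const_coeffs_def by metis
  then show ?thesis unfolding diff_coeffs_def by simp
qed

lemma diff_coeffs_fzero: "diff_coeffs fzero"
  unfolding diff_coeffs_def fzero_def by simp

lemma diff_coeffs_fsub: "diff_coeffs a \<Longrightarrow> diff_coeffs b \<Longrightarrow> diff_coeffs (fsub a b)"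
  unfolding diff_coeffs_def fsub_def by (auto intro!: field_differentiable_diff)

lemma diff_coeffs_gen_wedge:
  assumes "diff_coeffs a"
  shows "diff_coeffs (gen_wedge g a)"
  unfolding diff_coeffs_def
proof (intro allI)
  fix S x i
  show "(\<lambda>t. gen_wedge g a S (x(i := t))) field_differentiable at (x i)"
  proof (cases "finite S \<and> g \<in> S")
    case True
    then show ?thesis using assms
      unfolding diff_coeffs_def gen_wedge_def by (simp add: field_differentiable_mult)
  next
    case False
    then show ?thesis unfolding gen_wedge_def by (simp only: if_not_P if_False field_differentiable_const)
  qed
qed

lemma field_differentiable_coordinate: "(\<lambda>t. (x(i := t)) k) field_differentiable (at z)"
  by (cases "k = i") auto

lemma diff_coeffs_fmult_coordinate: "diff_coeffs a \<Longrightarrow> diff_coeffs (fmult (\<lambda>x. x m) a)"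
  unfolding diff_coeffs_def fmult_def
  by (simp add: field_differentiable_mult field_differentiable_coordinate del: fun_upd_apply)

lemma diff_coeffs_ftheta: "diff_coeffs a \<Longrightarrow> diff_coeffs (ftheta n a)"
  unfolding diff_coeffs_def ftheta_def
  by (intro allI field_differentiable_sum ballI field_differentiable_mult
      field_differentiable_const field_differentiable_coordinate) auto

lemma fd_const:
  assumes "const_coeffs a"
  shows "fd n a = fzero"
proof -
  have "partial_deriv i (a T) x = 0" for i T x
    using assms unfolding const_coeffs_def by (intro partial_deriv_const[where k="a T x"]) auto
  then show ?thesis unfolding fd_def fzero_def by simp
qed

lemma fd_fzero: "fd n fzero = fzero"
  by (rule fd_const) (simp add: const_coeffs_def fzero_def)

lemma fd_fadd:
  assumes "diff_coeffs a" "diff_coeffs b"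
  shows "fd n (fadd a b) = fadd (fd n a) (fd n b)"
  using assms unfolding fd_def fadd_def diff_coeffs_def partial_deriv_def
  by (simp add: fun_eq_iff algebra_simps sum.distrib)

lemma fd_fsub:
  assumes "diff_coeffs a" "diff_coeffs b"
  shows "fd n (fsub a b) = fsub (fd n a) (fd n b)"
  using assms unfolding fd_def fsub_def diff_coeffs_def partial_deriv_def
  by (simp add: fun_eq_iff algebra_simps sum_subtractf)

lemma partial_deriv_gen_wedge:
  assumes "diff_coeffs a"
  shows "partial_deriv i (gen_wedge g a T) x
     = (if finite T \<and> g \<in> T then (-1) ^ count_below T g * partial_deriv i (a (T - {g})) x else 0)"
proof (cases "finite T \<and> g \<in> T")
  case True
  then show ?thesis
    using assms unfolding diff_coeffs_def gen_wedge_def partial_deriv_def by (simp add: deriv_cmult)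
next
  case False
  then have "gen_wedge g a T = (\<lambda>y. 0)" unfolding gen_wedge_def by auto
  then show ?thesis using False unfolding partial_deriv_def by auto
qed

lemma fd_gen_wedge:
  assumes "diff_coeffs a"
  shows "fd n (gen_wedge g a) = fsmul (-1) (gen_wedge g (fd n a))"
proof (intro ext)
  fix S x
  show "fd n (gen_wedge g a) S x = fsmul (-1) (gen_wedge g (fd n a)) S x"
  proof (cases "finite S \<and> g \<in> S")
    case False
    then have "fd n (gen_wedge g a) S x = 0"
      unfolding fd_def using assms by (intro sum.neutral) (auto simp: partial_deriv_gen_wedge)
    then show ?thesis using False by (auto simp: fsmul_def gen_wedge_def)
  next
    case True
    then have fin: "finite S" and gS: "g \<in> S" by auto
    have "fd n (gen_wedge g a) S x = (\<Sum>i\<in>S \<inter> {..<n}. if i = g then 0 else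
        (-1) ^ count_below S i * (-1) ^ count_below (S - {i}) g * partial_deriv i (a (S - {i} - {g})) x)"
      unfolding fd_def using assms fin gS
      by (intro sum.cong refl) (auto simp: partial_deriv_gen_wedge ksign_singleton count_below_remove_self)
    also have "\<dots> = (\<Sum>i\<in>(S - {g}) \<inter> {..<n}.
        (-1) ^ count_below S i * (-1) ^ count_below (S - {i}) g * partial_deriv i (a (S - {i} - {g})) x)"
      by (rule sum.mono_neutral_cong_right) auto
    also have "\<dots> = (\<Sum>i\<in>(S - {g}) \<inter> {..<n}.
        - ((-1) ^ count_below S g * ((-1) ^ count_below (S - {g}) i * partial_deriv i (a (S - {g} - {i})) x)))"
    proof (intro sum.cong refl)
      fix i assume i: "i \<in> (S - {g}) \<inter> {..<n}"
      have "S - {i} - {g} = S - {g} - {i}" by auto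
      then show "(-1) ^ count_below S i * (-1) ^ count_below (S - {i}) g * partial_deriv i (a (S - {i} - {g})) x
        = - ((-1) ^ count_below S g * ((-1) ^ count_below (S - {g}) i * partial_deriv i (a (S - {g} - {i})) x))"
        using count_below_remove_sign[OF fin, of i g] i gS by simp
    qed
    also have "\<dots> = - ((-1) ^ count_below S g * fd n a (S - {g}) x)"
      unfolding fd_def by (simp add: sum_negf sum_distrib_left ksign_singleton count_below_remove_self)
    finally show ?thesis using fin gS by (simp add: fsmul_def gen_wedge_def)
  qed
qed

lemma fd_fmult_coordinate:
  assumes "const_coeffs a" "finitary a" "m < n"
  shows "fd n (fmult (\<lambda>x. x m) a) = gen_wedge m a"
proof (intro ext)
  fix S x
  have "fmult (\<lambda>x. x m) a T = (\<lambda>y. y m * a T x)" for T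
    using assms(1) unfolding fmult_def const_coeffs_def by metis
  then have "partial_deriv i (fmult (\<lambda>x. x m) a T) x = (if i = m then a T x else 0)" for i T
    unfolding partial_deriv_def by auto
  then have "fd n (fmult (\<lambda>x. x m) a) S x
      = (\<Sum>i\<in>S \<inter> {..<n}. if i = m then ksign {m} (S - {m}) * a (S - {m}) x else 0)"
    unfolding fd_def by (intro sum.cong) auto
  also have "\<dots> = (if m \<in> S then ksign {m} (S - {m}) * a (S - {m}) x else 0)"
    using assms(3) by (simp add: sum.delta')
  also have "\<dots> = gen_wedge m a S x"
    using assms(2) by (cases "finite S")
      (auto simp: gen_wedge_def ksign_singleton count_below_remove_self finitary_def)
  finally show "fd n (fmult (\<lambda>x. x m) a) S x = gen_wedge m a S x" .
qed

lemma omega_part_fadd: "omega_part n p (fadd a b) = fadd (omega_part n p a) (omega_part n p b)"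
  unfolding omega_part_def fadd_def by (auto simp: fun_eq_iff)

lemma omega_part_fsmul: "omega_part n p (fsmul r a) = fsmul r (omega_part n p a)"
  unfolding omega_part_def fsmul_def by (auto simp: fun_eq_iff)

lemma omega_part_gen_wedge_low:
  assumes "g < n"
  shows "omega_part n p (gen_wedge g a) = gen_wedge g (omega_part n (p - 1) a)"
proof (intro ext)
  fix S x
  show "omega_part n p (gen_wedge g a) S x = gen_wedge g (omega_part n (p - 1) a) S x"
  proof (cases "finite S \<and> g \<in> S")
    case True
    then have "S \<inter> {..<n} = insert g ((S - {g}) \<inter> {..<n})" using assms by auto
    then have "card (S \<inter> {..<n}) = Suc (card ((S - {g}) \<inter> {..<n}))" by simp
    then show ?thesis using True unfolding omega_part_def gen_wedge_def by auto
  next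
    case False
    then show ?thesis unfolding omega_part_def gen_wedge_def by auto
  qed
qed

lemma omega_part_gen_wedge_high:
  assumes "n \<le> g"
  shows "omega_part n p (gen_wedge g a) = gen_wedge g (omega_part n p a)"
proof -
  have "(S - {g}) \<inter> {..<n} = S \<inter> {..<n}" for S using assms by auto
  then show ?thesis unfolding omega_part_def gen_wedge_def by (auto simp: fun_eq_iff)
qed

section \<open>The form \<open>\<psi>\<close>\<close>

lemma sum_unitv:
  assumes "m < n"
  shows "(\<Sum>j<n. unitv m j * f j) = (f m :: real)"
proof -
  have "(\<Sum>j<n. unitv m j * f j) = (\<Sum>j<n. if j = m then f j else 0)"
    by (intro sum.cong) (auto simp: unitv_def)
  then show ?thesis using assms by simp
qed

lemma lin_fun_unitv: "j < n \<Longrightarrow> lin_fun n (unitv j) = (\<lambda>x. x j)"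
  unfolding lin_fun_def by (simp add: sum_unitv)

lemma fwedge_Delta1_unitv:
  assumes "m < n"
  shows "fwedge (Delta1 n (unitv m)) a = pair_wedge m (n + m) a"
  unfolding Delta1_def fwedge_fadd_left fwedge_fd_lin_fun fwedge_covec pair_wedge_def
  using sum_unitv[OF assms, of "\<lambda>j. gen_wedge j a _ _"] sum_unitv[OF assms, of "\<lambda>j. gen_wedge (n + j) a _ _"]
  by (simp add: fadd_def)

definition psi_tail :: "nat \<Rightarrow> nat \<Rightarrow> form" where
  "psi_tail n m = foldr (\<lambda>j acc. fwedge (Delta1 n (unitv j)) acc) [m..<n] fone"

lemma psi_eq_psi_tail: "psi n = psi_tail n 0"
  unfolding psi_tail_def psi_def by simp

lemma psi_tail_beyond: "n \<le> m \<Longrightarrow> psi_tail n m = fone"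
  unfolding psi_tail_def by simp

lemma psi_tail_Suc:
  assumes "m < n"
  shows "psi_tail n m = pair_wedge m (n + m) (psi_tail n (Suc m))"
  using assms fwedge_Delta1_unitv[OF assms] unfolding psi_tail_def by (simp add: upt_conv_Cons)

lemma finitary_psi_tail: "finitary (psi_tail n m)"
  by (cases "m < n") (simp_all add: psi_tail_Suc psi_tail_beyond finitary_pair_wedge finitary_fone)

lemma const_coeffs_psi_tail: "const_coeffs (psi_tail n m)"
proof (induction "n - m" arbitrary: m)
  case 0
  then show ?case by (simp add: psi_tail_beyond const_coeffs_fone)
next
  case (Suc k)
  then have "const_coeffs (psi_tail n (Suc m))" by simp
  then show ?case using Suc.hyps(2) by (simp add: psi_tail_Suc const_coeffs_pair_wedge)
qed

lemma pair_wedge_psi_tail: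
  assumes "m \<le> k" "k < n"
  shows "pair_wedge k (n + k) (psi_tail n m) = fzero"
  using assms(1)
proof (induction m rule: inc_induct)
  case base
  show ?case using assms(2) by (simp add: psi_tail_Suc pair_wedge_pair_wedge_self)
next
  case (step l)
  have "distinct [k, n + k, l, n + l]" using step.hyps assms(2) by auto
  moreover have "l < n" using step.hyps(2) assms(2) by simp
  ultimately show ?case
    unfolding psi_tail_Suc[OF \<open>l < n\<close>] pair_wedge_anticommute[OF \<open>distinct _\<close>] step.IH pair_wedge_fzero
    by (simp add: fsmul_def fzero_def)
qed

lemma finitary_psi_part: "finitary (psi_part n a)"
  unfolding psi_part_def psi_eq_psi_tail by (intro finitary_omega_part finitary_psi_tail)

lemma gen_wedge_mu_psi_part:
  assumes "j < n"
  shows "gen_wedge (n + j) (psi_part n a) = fsmul (-1) (gen_wedge j (psi_part n (a - 1)))"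
proof -
  have "pair_wedge j (n + j) (psi n) = fzero"
    using pair_wedge_psi_tail[of 0 j n] assms by (simp add: psi_eq_psi_tail)
  then have swap: "gen_wedge (n + j) (psi n) = fsmul (-1) (gen_wedge j (psi n))"
    by (simp add: pair_wedge_def fun_eq_iff fadd_def fsmul_def fzero_def add_eq_0_iff)
  have "gen_wedge (n + j) (psi_part n a) = omega_part n a (gen_wedge (n + j) (psi n))"
    unfolding psi_part_def by (simp add: omega_part_gen_wedge_high)
  also have "\<dots> = fsmul (-1) (omega_part n a (gen_wedge j (psi n)))"
    by (simp add: swap omega_part_fsmul)
  also have "\<dots> = fsmul (-1) (gen_wedge j (psi_part n (a - 1)))"
    unfolding psi_part_def using assms by (simp add: omega_part_gen_wedge_low)
  finally show ?thesis .
qed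

lemma covec_wedge_psi_part:
  "fwedge (covec n c) (psi_part n a)
     = fsmul (-1) (fwedge (fd n (fun0 (lin_fun n c))) (psi_part n (a - 1)))"
  unfolding fwedge_covec fwedge_fd_lin_fun
  by (simp add: fun_eq_iff gen_wedge_mu_psi_part fsmul_def sum_negf sum_distrib_left)

lemma gen_wedge_mu_nu:
  assumes "j < n"
  shows "gen_wedge (n + j) (nu n a) S x = x j * psi_part n a S x - gen_wedge j (nu n (a - 1)) S x"
proof -
  have "ftheta n (gen_wedge (n + j) (psi_part n a))
      = fsub (fmult (\<lambda>x. x j) (psi_part n a)) (gen_wedge (n + j) (nu n a))"
    using assms unfolding nu_def by (simp add: ftheta_gen_wedge finitary_psi_part)
  moreover have "ftheta n (gen_wedge j (psi_part n (a - 1))) = fsub fzero (gen_wedge j (nu n (a - 1)))"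
    using assms unfolding nu_def by (simp add: ftheta_gen_wedge finitary_psi_part)
  moreover have "ftheta n (gen_wedge (n + j) (psi_part n a))
      = fsmul (-1) (ftheta n (gen_wedge j (psi_part n (a - 1))))"
    using assms by (simp add: gen_wedge_mu_psi_part ftheta_fsmul)
  ultimately show ?thesis
    by (simp add: fun_eq_iff fsub_def fsmul_def fzero_def fmult_def)
qed

lemma covec_wedge_nu:
  "fwedge (covec n c) (nu n a)
     = fsub (fwedge (fun0 (lin_fun n c)) (psi_part n a))
            (fwedge (fd n (fun0 (lin_fun n c))) (nu n (a - 1)))"
proof (intro ext)
  fix S x
  have "(\<Sum>j<n. c j * gen_wedge (n + j) (nu n a) S x)
      = (\<Sum>j<n. c j * x j * psi_part n a S x - c j * gen_wedge j (nu n (a - 1)) S x)"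
    by (intro sum.cong refl) (simp add: gen_wedge_mu_nu right_diff_distrib mult.assoc)
  also have "\<dots> = lin_fun n c x * psi_part n a S x - (\<Sum>j<n. c j * gen_wedge j (nu n (a - 1)) S x)"
    unfolding lin_fun_def by (simp add: sum_subtractf sum_distrib_right)
  finally show "fwedge (covec n c) (nu n a) S x
     = fsub (fwedge (fun0 (lin_fun n c)) (psi_part n a))
            (fwedge (fd n (fun0 (lin_fun n c))) (nu n (a - 1))) S x"
    by (simp add: fwedge_covec fwedge_fd_lin_fun fwedge_fun0[OF finitary_psi_part] fsub_def fmult_def)
qed

lemma fd_ftheta_omega_part_fone:
  "fd n (ftheta n (omega_part n b fone)) = fsmul (of_int b + 1) (omega_part n (b + 1) fone)"
proof -
  have "ftheta n (omega_part n b fone) = fzero"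
    unfolding ftheta_def omega_part_def fone_def fzero_def by (intro ext sum.neutral) auto
  moreover have "fsmul (of_int b + 1) (omega_part n (b + 1) fone) = fzero"
    unfolding fsmul_def omega_part_def fone_def fzero_def by (auto simp: fun_eq_iff)
  ultimately show ?thesis by (simp add: fd_fzero)
qed

text \<open>\<open>\<theta>\<close> turns the \<open>\<mu>\<^sub>m\<close>-part into \<open>x\<^sub>m \<Omega>\<^sub>b\<close>, and \<open>d (x\<^sub>m \<Omega>\<^sub>b) = dx\<^sub>m \<and> \<Omega>\<^sub>b\<close> supplies
  the summand that raises the factor \<open>b\<close> to \<open>b + 1\<close>.\<close>

lemma fd_ftheta_omega_part_pair_wedge:
  assumes "m < n" "finitary X" "const_coeffs X"
    and IH: "\<And>p. fd n (ftheta n (omega_part n p X)) = fsmul (of_int p + 1) (omega_part n (p + 1) X)"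
  shows "fd n (ftheta n (omega_part n b (pair_wedge m (n + m) X)))
       = fsmul (of_int b + 1) (omega_part n (b + 1) (pair_wedge m (n + m) X))"
proof -
  define Om where "Om p = omega_part n p X" for p
  have fin: "finitary (Om p)" and cst: "const_coeffs (Om p)" for p
    unfolding Om_def using assms(2,3) by (simp_all add: finitary_omega_part const_coeffs_omega_part)
  have diff: "diff_coeffs (Om p)" "diff_coeffs (ftheta n (Om p))" for p
    using cst by (simp_all add: diff_coeffs_const diff_coeffs_ftheta)
  have split: "omega_part n p (pair_wedge m (n + m) X)
      = fadd (gen_wedge m (Om (p - 1))) (gen_wedge (n + m) (Om p))" for p
    unfolding pair_wedge_def omega_part_fadd Om_def
    using assms(1) by (simp add: omega_part_gen_wedge_low omega_part_gen_wedge_high)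
  have theta: "ftheta n (omega_part n b (pair_wedge m (n + m) X))
      = fadd (fsub fzero (gen_wedge m (ftheta n (Om (b - 1)))))
             (fsub (fmult (\<lambda>x. x m) (Om b)) (gen_wedge (n + m) (ftheta n (Om b))))"
    unfolding split ftheta_fadd using assms(1) fin by (simp add: ftheta_gen_wedge)
  have d1: "diff_coeffs (fsub fzero (gen_wedge m (ftheta n (Om (b - 1)))))"
    by (intro diff_coeffs_fsub diff_coeffs_fzero diff_coeffs_gen_wedge diff)
  have d2: "diff_coeffs (fsub (fmult (\<lambda>x. x m) (Om b)) (gen_wedge (n + m) (ftheta n (Om b))))"
    using diff by (intro diff_coeffs_fsub diff_coeffs_fmult_coordinate diff_coeffs_gen_wedge)
  have "fd n (ftheta n (omega_part n b (pair_wedge m (n + m) X)))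
      = fadd (fsub fzero (fsmul (-1) (gen_wedge m (fd n (ftheta n (Om (b - 1)))))))
             (fsub (gen_wedge m (Om b)) (fsmul (-1) (gen_wedge (n + m) (fd n (ftheta n (Om b))))))"
    unfolding theta fd_fadd[OF d1 d2] using assms(1) fin cst diff
    by (simp add: fd_fsub fd_fzero fd_gen_wedge fd_fmult_coordinate diff_coeffs_gen_wedge
        diff_coeffs_fmult_coordinate diff_coeffs_fzero)
  also have "\<dots> = fadd (fsub fzero (fsmul (-1) (gen_wedge m (fsmul (of_int b) (Om b)))))
      (fsub (gen_wedge m (Om b)) (fsmul (-1) (gen_wedge (n + m) (fsmul (of_int b + 1) (Om (b + 1))))))"
    by (simp add: IH[folded Om_def])
  also have "\<dots> = fsmul (of_int b + 1) (omega_part n (b + 1) (pair_wedge m (n + m) X))"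
    unfolding split gen_wedge_fsmul
    by (simp add: fun_eq_iff fadd_def fsub_def fsmul_def fzero_def algebra_simps)
  finally show ?thesis .
qed

lemma fd_ftheta_omega_part_psi_tail:
  "fd n (ftheta n (omega_part n b (psi_tail n m)))
     = fsmul (of_int b + 1) (omega_part n (b + 1) (psi_tail n m))"
proof (induction "n - m" arbitrary: m b)
  case 0
  then show ?case by (simp add: psi_tail_beyond fd_ftheta_omega_part_fone)
next
  case (Suc k)
  then have "m < n" by simp
  moreover have "fd n (ftheta n (omega_part n p (psi_tail n (Suc m))))
      = fsmul (of_int p + 1) (omega_part n (p + 1) (psi_tail n (Suc m)))" for p
    using Suc.hyps by simp
  ultimately show ?case
    unfolding psi_tail_Suc[OF \<open>m < n\<close>]
    by (intro fd_ftheta_omega_part_pair_wedge finitary_psi_tail const_coeffs_psi_tail)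
qed

lemma fd_nu: "fd n (nu n a) = fsmul (of_int a + 1) (psi_part n (a + 1))"
  unfolding nu_def psi_part_def psi_eq_psi_tail by (rule fd_ftheta_omega_part_psi_tail)

lemma kappa_wedge_nu:
  "fwedge (kappa1 n j) (nu n a)
     = fsub (fwedge (kappaV n j) (psi_part n a)) (fwedge (fd n (kappaV n j)) (nu n (a - 1)))"
proof (cases "j < n")
  case True
  then show ?thesis
    using covec_wedge_nu[of n "unitv j" a] by (simp add: kappa1_def kappaV_def lin_fun_unitv)
next
  case False
  then have "kappa1 n j = fzero" "kappaV n j = fzero" by (simp_all add: kappa1_def kappaV_def)
  then show ?thesis by (simp add: fwedge_fzero_left fd_fzero) (simp add: fsub_def fzero_def)
qed

theorem mainTheorem15:
  fixes n :: nat and c :: "nat \<Rightarrow> real" and a :: int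
  shows "fd n (nu n a) = fsmul (of_int a + 1) (psi_part n (a + 1))
    \<and> fwedge (covec n c) (psi_part n a)
        = fsmul (-1) (fwedge (fd n (fun0 (lin_fun n c))) (psi_part n (a - 1)))
    \<and> fwedge (covec n c) (nu n a)
        = fsub (fwedge (fun0 (lin_fun n c)) (psi_part n a))
               (fwedge (fd n (fun0 (lin_fun n c))) (nu n (a - 1)))
    \<and> (\<lambda>j. fwedge (kappa1 n j) (nu n a))
        = (\<lambda>j. fsub (fwedge (kappaV n j) (psi_part n a))
                     (fwedge (fd n (kappaV n j)) (nu n (a - 1))))"
  using fd_nu covec_wedge_psi_part covec_wedge_nu kappa_wedge_nu by blast

end
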